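(* Let $\mathbb{C}$ be a pointed protomodular category. An object $X$ of $\mathbb{C}$ is strong-complete if and only if $X$ is proto-complete and has trivial center.
   Context: $\mathbb{C}$ is pointed with finite limits; it is protomodular if the split short five lemma holds (for a morphism of split extensions whose kernel and codomain components are isomorphisms, the middle component is an isomorphism). A protosplit monomorphism is a kernel of a split epimorphism. An object $X$ is proto-complete if every protosplit monomorphism with domain $X$ is a split monomorphism, and strong-complete if every protosplit monomorphism with domain $X$ is a split monomorphism with a unique section (retraction). The center of $X$ is the terminal object among morphisms $g:B\to X$ commuting with $1_X$ (i.e. such that some $\varphi:B\times X\to X$ has $\varphi\langle1,0\rangle=g$, $\varphi\langle0,1\rangle=1_X$), with morphisms being maps over $X$; $X$ has trivial center if the center is the zero object. *)

theory Defs
  imports Main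
begin

record ('o, 'a) cat =
  Obj  :: "'o set"
  Arr  :: "'a set"
  Dom  :: "'a \<Rightarrow> 'o"
  Cod  :: "'a \<Rightarrow> 'o"
  Id   :: "'o \<Rightarrow> 'a"
  Comp :: "'a \<Rightarrow> 'a \<Rightarrow> 'a"   (* Comp C g f = g \<circ> f *)

definition hom :: "('o, 'a) cat \<Rightarrow> 'a \<Rightarrow> 'o \<Rightarrow> 'o \<Rightarrow> bool" where
  "hom C f X Y \<longleftrightarrow> f \<in> Arr C \<and> Dom C f = X \<and> Cod C f = Y"

definition category :: "('o, 'a) cat \<Rightarrow> bool" where
  "category C \<longleftrightarrow>
     (\<forall>f \<in> Arr C. Dom C f \<in> Obj C \<and> Cod C f \<in> Obj C) \<and>
     (\<forall>X \<in> Obj C. hom C (Id C X) X X) \<and>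
     (\<forall>f g X Y Z. hom C f X Y \<longrightarrow> hom C g Y Z \<longrightarrow> hom C (Comp C g f) X Z) \<and>
     (\<forall>f X Y. hom C f X Y \<longrightarrow> Comp C f (Id C X) = f \<and> Comp C (Id C Y) f = f) \<and>
     (\<forall>f g h W X Y Z. hom C f W X \<longrightarrow> hom C g X Y \<longrightarrow> hom C h Y Z \<longrightarrow>
        Comp C h (Comp C g f) = Comp C (Comp C h g) f)"

definition iso :: "('o, 'a) cat \<Rightarrow> 'a \<Rightarrow> bool" where
  "iso C f \<longleftrightarrow> f \<in> Arr C \<and> (\<exists>g. hom C g (Cod C f) (Dom C f) \<and>
       Comp C g f = Id C (Dom C f) \<and> Comp C f g = Id C (Cod C f))"

definition terminal_obj :: "('o, 'a) cat \<Rightarrow> 'o \<Rightarrow> bool" where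
  "terminal_obj C T \<longleftrightarrow> T \<in> Obj C \<and> (\<forall>Y \<in> Obj C. \<exists>!f. hom C f Y T)"

definition initial_obj :: "('o, 'a) cat \<Rightarrow> 'o \<Rightarrow> bool" where
  "initial_obj C I \<longleftrightarrow> I \<in> Obj C \<and> (\<forall>Y \<in> Obj C. \<exists>!f. hom C f I Y)"

definition zero_obj :: "('o, 'a) cat \<Rightarrow> 'o \<Rightarrow> bool" where
  "zero_obj C Z \<longleftrightarrow> terminal_obj C Z \<and> initial_obj C Z"

definition pointed :: "('o, 'a) cat \<Rightarrow> bool" where
  "pointed C \<longleftrightarrow> category C \<and> (\<exists>Z. zero_obj C Z)"

definition zero_arr :: "('o, 'a) cat \<Rightarrow> 'o \<Rightarrow> 'o \<Rightarrow> 'a" where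
  "zero_arr C X Y = (THE f. hom C f X Y \<and>
      (\<exists>Z a b. zero_obj C Z \<and> hom C a X Z \<and> hom C b Z Y \<and> f = Comp C b a))"

definition is_pullback :: "('o, 'a) cat \<Rightarrow> 'a \<Rightarrow> 'a \<Rightarrow> 'o \<Rightarrow> 'a \<Rightarrow> 'a \<Rightarrow> bool" where
  "is_pullback C f g P p q \<longleftrightarrow> Cod C f = Cod C g \<and>
     hom C f (Dom C f) (Cod C f) \<and> hom C g (Dom C g) (Cod C g) \<and>
     hom C p P (Dom C f) \<and> hom C q P (Dom C g) \<and> Comp C f p = Comp C g q \<and>
     (\<forall>W u v. hom C u W (Dom C f) \<longrightarrow> hom C v W (Dom C g) \<longrightarrow> Comp C f u = Comp C g v \<longrightarrow>
        (\<exists>!h. hom C h W P \<and> Comp C p h = u \<and> Comp C q h = v))"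

definition finite_limits :: "('o, 'a) cat \<Rightarrow> bool" where
  "finite_limits C \<longleftrightarrow> (\<exists>T. terminal_obj C T) \<and>
     (\<forall>f g. f \<in> Arr C \<longrightarrow> g \<in> Arr C \<longrightarrow> Cod C f = Cod C g \<longrightarrow>
        (\<exists>P p q. is_pullback C f g P p q))"

definition is_product :: "('o, 'a) cat \<Rightarrow> 'o \<Rightarrow> 'o \<Rightarrow> 'o \<Rightarrow> 'a \<Rightarrow> 'a \<Rightarrow> bool" where
  "is_product C A B P p1 p2 \<longleftrightarrow> hom C p1 P A \<and> hom C p2 P B \<and>
     (\<forall>W u v. hom C u W A \<longrightarrow> hom C v W B \<longrightarrow>
        (\<exists>!h. hom C h W P \<and> Comp C p1 h = u \<and> Comp C p2 h = v))"

definition is_kernel :: "('o, 'a) cat \<Rightarrow> 'a \<Rightarrow> 'a \<Rightarrow> bool" where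
  "is_kernel C f k \<longleftrightarrow> f \<in> Arr C \<and> hom C k (Dom C k) (Dom C f) \<and>
     Comp C f k = zero_arr C (Dom C k) (Cod C f) \<and>
     (\<forall>W u. hom C u W (Dom C f) \<longrightarrow> Comp C f u = zero_arr C W (Cod C f) \<longrightarrow>
        (\<exists>!h. hom C h W (Dom C k) \<and> Comp C k h = u))"

definition split_epi :: "('o, 'a) cat \<Rightarrow> 'a \<Rightarrow> bool" where
  "split_epi C p \<longleftrightarrow> p \<in> Arr C \<and>
     (\<exists>s. hom C s (Cod C p) (Dom C p) \<and> Comp C p s = Id C (Cod C p))"

definition split_mono :: "('o, 'a) cat \<Rightarrow> 'a \<Rightarrow> bool" where
  "split_mono C m \<longleftrightarrow> m \<in> Arr C \<and>
     (\<exists>r. hom C r (Cod C m) (Dom C m) \<and> Comp C r m = Id C (Dom C m))"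

definition split_ext :: "('o, 'a) cat \<Rightarrow> 'a \<Rightarrow> 'a \<Rightarrow> 'a \<Rightarrow> bool" where
  "split_ext C k p s \<longleftrightarrow> is_kernel C p k \<and>
     hom C s (Cod C p) (Dom C p) \<and> Comp C p s = Id C (Cod C p)"

definition split_ext_morph ::
  "('o, 'a) cat \<Rightarrow> 'a \<Rightarrow> 'a \<Rightarrow> 'a \<Rightarrow> 'a \<Rightarrow> 'a \<Rightarrow> 'a \<Rightarrow> 'a \<Rightarrow> 'a \<Rightarrow> 'a \<Rightarrow> bool" where
  "split_ext_morph C k p s k' p' s' u v w \<longleftrightarrow>
     split_ext C k p s \<and> split_ext C k' p' s' \<and>
     hom C u (Dom C k) (Dom C k') \<and> hom C v (Dom C p) (Dom C p') \<and>
     hom C w (Cod C p) (Cod C p') \<and>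
     Comp C v k = Comp C k' u \<and> Comp C p' v = Comp C w p \<and> Comp C v s = Comp C s' w"

definition protomodular :: "('o, 'a) cat \<Rightarrow> bool" where
  "protomodular C \<longleftrightarrow>
     (\<forall>k p s k' p' s' u v w. split_ext_morph C k p s k' p' s' u v w \<longrightarrow>
        iso C u \<longrightarrow> iso C w \<longrightarrow> iso C v)"

definition pointed_protomodular :: "('o, 'a) cat \<Rightarrow> bool" where
  "pointed_protomodular C \<longleftrightarrow> pointed C \<and> finite_limits C \<and> protomodular C"

definition protosplit_mono :: "('o, 'a) cat \<Rightarrow> 'a \<Rightarrow> bool" where
  "protosplit_mono C k \<longleftrightarrow> (\<exists>p. split_epi C p \<and> is_kernel C p k)"

definition proto_complete :: "('o, 'a) cat \<Rightarrow> 'o \<Rightarrow> bool" where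
  "proto_complete C X \<longleftrightarrow>
     (\<forall>k. protosplit_mono C k \<longrightarrow> Dom C k = X \<longrightarrow> split_mono C k)"

definition strong_complete :: "('o, 'a) cat \<Rightarrow> 'o \<Rightarrow> bool" where
  "strong_complete C X \<longleftrightarrow>
     (\<forall>k. protosplit_mono C k \<longrightarrow> Dom C k = X \<longrightarrow>
        (\<exists>!r. hom C r (Cod C k) X \<and> Comp C r k = Id C X))"

text \<open>g : B \<rightarrow> X commutes with 1_X: some \<phi> : B \<times> X \<rightarrow> X with
  \<phi>\<langle>1,0\<rangle> = g and \<phi>\<langle>0,1\<rangle> = 1_X.\<close>
definition commutes_with_id :: "('o, 'a) cat \<Rightarrow> 'o \<Rightarrow> 'a \<Rightarrow> bool" where
  "commutes_with_id C X g \<longleftrightarrow> hom C g (Dom C g) X \<and>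
     (\<exists>P p1 p2 i1 i2 \<phi>. is_product C (Dom C g) X P p1 p2 \<and>
        hom C i1 (Dom C g) P \<and> Comp C p1 i1 = Id C (Dom C g) \<and>
        Comp C p2 i1 = zero_arr C (Dom C g) X \<and>
        hom C i2 X P \<and> Comp C p1 i2 = zero_arr C X (Dom C g) \<and> Comp C p2 i2 = Id C X \<and>
        hom C \<phi> P X \<and> Comp C \<phi> i1 = g \<and> Comp C \<phi> i2 = Id C X)"

definition is_center :: "('o, 'a) cat \<Rightarrow> 'o \<Rightarrow> 'o \<Rightarrow> 'a \<Rightarrow> bool" where
  "is_center C X Z z \<longleftrightarrow> hom C z Z X \<and> commutes_with_id C X z \<and>
     (\<forall>g. commutes_with_id C X g \<longrightarrow>
        (\<exists>!h. hom C h (Dom C g) Z \<and> Comp C z h = g))"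

definition trivial_center :: "('o, 'a) cat \<Rightarrow> 'o \<Rightarrow> bool" where
  "trivial_center C X \<longleftrightarrow> (\<exists>Z z. is_center C X Z z \<and> zero_obj C Z)"

end

theory Submission
  imports Defs
begin

(* If k : X \<rightarrow> A is the kernel of a split epi p : A \<rightarrow> B and r is a retraction of k,
   then \<langle>p, r\<rangle> : A \<rightarrow> B \<times> X is an isomorphism of split extensions by the short five lemma,
   carrying k to the injection \<langle>0, 1\<rangle> : X \<rightarrow> B \<times> X.  So a proto-complete X is strong-complete
   iff each injection X \<rightarrow> B \<times> X has only the retraction \<pi>\<^sub>2.  A retraction \<phi> of it is
   exactly a witness that g = \<phi>\<langle>1, 0\<rangle> commutes with 1_X, and since \<langle>0, 1\<rangle> and the
   section \<langle>1, 0\<rangle> are jointly epic, \<phi> = \<pi>\<^sub>2 iff g = 0.  Hence uniqueness of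
   retractions means that every morphism commuting with 1_X is zero: the center is trivial. *)

lemma protosplit_mono_iff_split_ext: "protosplit_mono C k \<longleftrightarrow> (\<exists>p s. split_ext C k p s)"
  unfolding protosplit_mono_def split_epi_def split_ext_def is_kernel_def by blast

lemma split_ext_homs:
  assumes "split_ext C k p s"
  shows "hom C k (Dom C k) (Dom C p)" and "hom C p (Dom C p) (Cod C p)"
    and "hom C s (Cod C p) (Dom C p)" and "Comp C p s = Id C (Cod C p)"
    and "Comp C p k = zero_arr C (Dom C k) (Cod C p)"
  using assms unfolding split_ext_def is_kernel_def hom_def by auto

lemma strong_complete_imp_proto_complete: "strong_complete C X \<Longrightarrow> proto_complete C X"
  unfolding strong_complete_def proto_complete_def split_mono_def
  by (metis protosplit_mono_iff_split_ext split_ext_homs(1) hom_def)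

definition monic :: "('o, 'a) cat \<Rightarrow> 'a \<Rightarrow> bool" where
  "monic C m \<longleftrightarrow> (\<forall>W h h'. hom C h W (Dom C m) \<longrightarrow> hom C h' W (Dom C m) \<longrightarrow>
     Comp C m h = Comp C m h' \<longrightarrow> h = h')"

definition is_equalizer :: "('o, 'a) cat \<Rightarrow> 'a \<Rightarrow> 'a \<Rightarrow> 'o \<Rightarrow> 'a \<Rightarrow> bool" where
  "is_equalizer C f f' E e \<longleftrightarrow> f \<in> Arr C \<and> hom C f' (Dom C f) (Cod C f) \<and>
     hom C e E (Dom C f) \<and> Comp C f e = Comp C f' e \<and>
     (\<forall>W u. hom C u W (Dom C f) \<longrightarrow> Comp C f u = Comp C f' u \<longrightarrow>
        (\<exists>!h. hom C h W E \<and> Comp C e h = u))"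

definition product_injections ::
  "('o, 'a) cat \<Rightarrow> 'o \<Rightarrow> 'o \<Rightarrow> 'o \<Rightarrow> 'a \<Rightarrow> 'a \<Rightarrow> 'a \<Rightarrow> 'a \<Rightarrow> bool" where
  "product_injections C A B P p1 p2 i1 i2 \<longleftrightarrow> is_product C A B P p1 p2 \<and>
     hom C i1 A P \<and> Comp C p1 i1 = Id C A \<and> Comp C p2 i1 = zero_arr C A B \<and>
     hom C i2 B P \<and> Comp C p1 i2 = zero_arr C B A \<and> Comp C p2 i2 = Id C B"

lemma commutes_with_id_iff:
  "commutes_with_id C X g \<longleftrightarrow> hom C g (Dom C g) X \<and>
     (\<exists>P p1 p2 i1 i2 \<phi>. product_injections C (Dom C g) X P p1 p2 i1 i2 \<and>
        hom C \<phi> P X \<and> Comp C \<phi> i1 = g \<and> Comp C \<phi> i2 = Id C X)"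
  unfolding commutes_with_id_def product_injections_def by blast

locale abstract_category =
  fixes C :: "('o, 'a) cat"
  assumes is_category: "category C"
begin

abbreviation arr_comp (infixr "\<cdot>" 70) where "g \<cdot> f \<equiv> Comp C g f"

lemma homD: "hom C f X Y \<Longrightarrow> f \<in> Arr C \<and> Dom C f = X \<and> Cod C f = Y"
  unfolding hom_def by blast

lemma hom_Obj: "hom C f X Y \<Longrightarrow> X \<in> Obj C \<and> Y \<in> Obj C"
  using is_category unfolding category_def hom_def by blast

lemma hom_Comp: "hom C f X Y \<Longrightarrow> hom C g Y Z \<Longrightarrow> hom C (g \<cdot> f) X Z"
  using is_category unfolding category_def by blast

lemma hom_Id: "X \<in> Obj C \<Longrightarrow> hom C (Id C X) X X"
  using is_category unfolding category_def by blast

lemma Comp_Id_left: "hom C f X Y \<Longrightarrow> Id C Y \<cdot> f = f"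
  using is_category unfolding category_def by blast

lemma Comp_Id_right: "hom C f X Y \<Longrightarrow> f \<cdot> Id C X = f"
  using is_category unfolding category_def by blast

lemma Comp_assoc:
  "hom C f W X \<Longrightarrow> hom C g X Y \<Longrightarrow> hom C h Y Z \<Longrightarrow> h \<cdot> (g \<cdot> f) = (h \<cdot> g) \<cdot> f"
  using is_category unfolding category_def by blast

lemma iso_Id: "X \<in> Obj C \<Longrightarrow> iso C (Id C X)"
  unfolding iso_def using hom_Id Comp_Id_left homD by metis

lemma iso_inverse:
  assumes "iso C f" and "hom C f X Y"
  obtains g where "hom C g Y X" and "g \<cdot> f = Id C X" and "f \<cdot> g = Id C Y"
  using assms unfolding iso_def hom_def by auto

lemma cancel_right_split_epi:
  assumes e: "hom C e E A" and s: "hom C s A E" and es: "e \<cdot> s = Id C A"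
    and f: "hom C f A Y" and f': "hom C f' A Y" and eq: "f \<cdot> e = f' \<cdot> e"
  shows "f = f'"
proof -
  have "f = (f \<cdot> e) \<cdot> s" using Comp_assoc[OF s e f] es Comp_Id_right[OF f] by simp
  also have "\<dots> = (f' \<cdot> e) \<cdot> s" using eq by simp
  also have "\<dots> = f'" using Comp_assoc[OF s e f'] es Comp_Id_right[OF f'] by simp
  finally show ?thesis .
qed

lemma product_homs: "is_product C A B P p1 p2 \<Longrightarrow> hom C p1 P A \<and> hom C p2 P B"
  unfolding is_product_def by blast

lemma product_pair:
  assumes "is_product C A B P p1 p2" and "hom C u W A" and "hom C v W B"
  obtains h where "hom C h W P" and "p1 \<cdot> h = u" and "p2 \<cdot> h = v"
  using assms unfolding is_product_def by blast

lemma product_arr_eqI: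
  assumes P: "is_product C A B P p1 p2" and h: "hom C h W P" and h': "hom C h' W P"
    and "p1 \<cdot> h = p1 \<cdot> h'" and "p2 \<cdot> h = p2 \<cdot> h'"
  shows "h = h'"
proof -
  have p: "hom C p1 P A" "hom C p2 P B" using product_homs[OF P] by auto
  have "\<exists>!x. hom C x W P \<and> p1 \<cdot> x = p1 \<cdot> h \<and> p2 \<cdot> x = p2 \<cdot> h"
    using P hom_Comp[OF h p(1)] hom_Comp[OF h p(2)] unfolding is_product_def by blast
  then show ?thesis using assms by metis
qed

lemma equalizer_monic:
  assumes "is_equalizer C f f' E e" shows "monic C e"
  unfolding monic_def
proof (intro allI impI)
  have f: "hom C f (Dom C f) (Cod C f)" and f': "hom C f' (Dom C f) (Cod C f)"
    and e: "hom C e E (Dom C f)" and fe: "f \<cdot> e = f' \<cdot> e"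
    and univ: "\<And>W u. hom C u W (Dom C f) \<Longrightarrow> f \<cdot> u = f' \<cdot> u \<Longrightarrow> \<exists>!h. hom C h W E \<and> e \<cdot> h = u"
    using assms unfolding is_equalizer_def by (auto simp: hom_def)
  fix W h h' assume h: "hom C h W (Dom C e)" and h': "hom C h' W (Dom C e)" and eq: "e \<cdot> h = e \<cdot> h'"
  have h: "hom C h W E" and h': "hom C h' W E" using h h' homD[OF e] by auto
  have "f \<cdot> (e \<cdot> h) = f' \<cdot> (e \<cdot> h)" using Comp_assoc[OF h e f] Comp_assoc[OF h e f'] fe by simp
  then have "\<exists>!x. hom C x W E \<and> e \<cdot> x = e \<cdot> h" using univ[OF hom_Comp[OF h e]] by simp
  then show "h = h'" using h h' eq by metis
qed

end

locale pointed_category = abstract_category +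
  assumes ex_zero_obj: "\<exists>Z. zero_obj C Z"
begin

lemma zero_obj_Obj: "zero_obj C Z \<Longrightarrow> Z \<in> Obj C"
  unfolding zero_obj_def terminal_obj_def by blast

lemma ex_hom_to_zero: "zero_obj C Z \<Longrightarrow> X \<in> Obj C \<Longrightarrow> \<exists>f. hom C f X Z"
  unfolding zero_obj_def terminal_obj_def by blast

lemma ex_hom_from_zero: "zero_obj C Z \<Longrightarrow> X \<in> Obj C \<Longrightarrow> \<exists>f. hom C f Z X"
  unfolding zero_obj_def initial_obj_def by blast

lemma hom_to_zero_unique: "zero_obj C Z \<Longrightarrow> hom C f X Z \<Longrightarrow> hom C g X Z \<Longrightarrow> f = g"
  unfolding zero_obj_def terminal_obj_def by (metis hom_Obj)

lemma hom_from_zero_unique: "zero_obj C Z \<Longrightarrow> hom C f Z X \<Longrightarrow> hom C g Z X \<Longrightarrow> f = g"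
  unfolding zero_obj_def initial_obj_def by (metis hom_Obj)

lemma zero_arr_eq:
  assumes Z: "zero_obj C Z" and a: "hom C a X Z" and b: "hom C b Z Y"
  shows "zero_arr C X Y = b \<cdot> a"
  unfolding zero_arr_def
proof (rule the_equality)
  show "hom C (b \<cdot> a) X Y \<and>
      (\<exists>Z a' b'. zero_obj C Z \<and> hom C a' X Z \<and> hom C b' Z Y \<and> b \<cdot> a = b' \<cdot> a')"
    using Z a b hom_Comp by blast
  fix f assume "hom C f X Y \<and>
      (\<exists>Z' a' b'. zero_obj C Z' \<and> hom C a' X Z' \<and> hom C b' Z' Y \<and> f = b' \<cdot> a')"
  then obtain Z' a' b' where Z': "zero_obj C Z'" and a': "hom C a' X Z'" and b': "hom C b' Z' Y"
    and f: "f = b' \<cdot> a'" by blast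
  obtain c where c: "hom C c Z Z'" using ex_hom_from_zero[OF Z zero_obj_Obj[OF Z']] by blast
  have "c \<cdot> a = a'" using hom_to_zero_unique[OF Z' hom_Comp[OF a c] a'] .
  moreover have "b' \<cdot> c = b" using hom_from_zero_unique[OF Z hom_Comp[OF c b'] b] .
  ultimately show "f = b \<cdot> a" using f Comp_assoc[OF a c b'] by simp
qed

lemma zero_arr_factorization:
  assumes "X \<in> Obj C" and "Y \<in> Obj C"
  obtains Z a b where "zero_obj C Z" and "hom C a X Z" and "hom C b Z Y"
    and "zero_arr C X Y = b \<cdot> a"
  using assms ex_zero_obj ex_hom_to_zero ex_hom_from_zero zero_arr_eq by metis

lemma hom_zero_arr: "X \<in> Obj C \<Longrightarrow> Y \<in> Obj C \<Longrightarrow> hom C (zero_arr C X Y) X Y"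
  by (metis zero_arr_factorization hom_Comp)

lemma zero_arr_Comp:
  assumes f: "hom C f W X" and Y: "Y \<in> Obj C"
  shows "zero_arr C X Y \<cdot> f = zero_arr C W Y"
proof -
  obtain Z a b where Z: "zero_obj C Z" and a: "hom C a X Z" and b: "hom C b Z Y"
    and 0: "zero_arr C X Y = b \<cdot> a"
    using zero_arr_factorization hom_Obj[OF f] Y by metis
  show ?thesis using zero_arr_eq[OF Z hom_Comp[OF f a] b] 0 Comp_assoc[OF f a b] by simp
qed

lemma kernel_monic:
  assumes ker: "is_kernel C p k" shows "monic C k"
  unfolding monic_def
proof (intro allI impI)
  fix W h h' assume h: "hom C h W (Dom C k)" and h': "hom C h' W (Dom C k)" and eq: "k \<cdot> h = k \<cdot> h'"
  have k: "hom C k (Dom C k) (Dom C p)" and p: "hom C p (Dom C p) (Cod C p)"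
    and pk: "p \<cdot> k = zero_arr C (Dom C k) (Cod C p)"
    using ker unfolding is_kernel_def hom_def by auto
  have "p \<cdot> (k \<cdot> h) = zero_arr C W (Cod C p)"
    using Comp_assoc[OF h k p] pk zero_arr_Comp[OF h] hom_Obj[OF p] by simp
  then have "\<exists>!x. hom C x W (Dom C k) \<and> k \<cdot> x = k \<cdot> h"
    using ker hom_Comp[OF h k] unfolding is_kernel_def by blast
  then show "h = h'" using h h' eq by metis
qed

lemma kernel_Comp_monic:
  assumes ker: "is_kernel C p k" and e: "hom C e E (Dom C p)" and mono: "monic C e"
    and kE: "hom C kE (Dom C k) E" and ek: "e \<cdot> kE = k"
  shows "is_kernel C (p \<cdot> e) kE"
proof -
  have k: "hom C k (Dom C k) (Dom C p)" and p: "hom C p (Dom C p) (Cod C p)"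
    and pk: "p \<cdot> k = zero_arr C (Dom C k) (Cod C p)"
    and univ: "\<And>W u. hom C u W (Dom C p) \<Longrightarrow> p \<cdot> u = zero_arr C W (Cod C p) \<Longrightarrow>
      \<exists>!h. hom C h W (Dom C k) \<and> k \<cdot> h = u"
    using ker unfolding is_kernel_def by (auto simp: hom_def)
  have pe: "hom C (p \<cdot> e) E (Cod C p)" using hom_Comp[OF e p] .
  have D: "Dom C kE = Dom C k" "Dom C (p \<cdot> e) = E" "Cod C (p \<cdot> e) = Cod C p"
    using homD[OF kE] homD[OF pe] by auto
  show ?thesis
    unfolding is_kernel_def D
  proof (intro conjI allI impI)
    show "p \<cdot> e \<in> Arr C" using homD[OF pe] by blast
    show "hom C kE (Dom C k) E" by fact
    show "(p \<cdot> e) \<cdot> kE = zero_arr C (Dom C k) (Cod C p)" using Comp_assoc[OF kE e p] ek pk by simp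
    fix W u assume u: "hom C u W E" and pu: "(p \<cdot> e) \<cdot> u = zero_arr C W (Cod C p)"
    obtain h where h: "hom C h W (Dom C k)" and kh: "k \<cdot> h = e \<cdot> u"
      using univ[OF hom_Comp[OF u e]] pu Comp_assoc[OF u e p] by auto
    have "e \<cdot> (kE \<cdot> h) = e \<cdot> u" using Comp_assoc[OF h kE e] ek kh by simp
    then have "kE \<cdot> h = u"
      using mono hom_Comp[OF h kE] u homD[OF e] unfolding monic_def by blast
    moreover have "h' = h" if h': "hom C h' W (Dom C k)" and "kE \<cdot> h' = u" for h'
    proof -
      have "k \<cdot> h' = k \<cdot> h" using Comp_assoc[OF h' kE e] ek kh that(2) by simp
      then show ?thesis using kernel_monic[OF ker] h h' unfolding monic_def by blast
    qed
    ultimately show "\<exists>!h. hom C h W (Dom C k) \<and> kE \<cdot> h = u" using h by blast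
  qed
qed

lemma product_injections_exist:
  assumes P: "is_product C A B P p1 p2"
  obtains i1 i2 where "product_injections C A B P p1 p2 i1 i2"
proof -
  have A: "A \<in> Obj C" and B: "B \<in> Obj C" using product_homs[OF P] hom_Obj by blast+
  obtain i1 where "hom C i1 A P" "p1 \<cdot> i1 = Id C A" "p2 \<cdot> i1 = zero_arr C A B"
    using product_pair[OF P hom_Id[OF A] hom_zero_arr[OF A B]] .
  moreover obtain i2 where "hom C i2 B P" "p1 \<cdot> i2 = zero_arr C B A" "p2 \<cdot> i2 = Id C B"
    using product_pair[OF P hom_zero_arr[OF B A] hom_Id[OF B]] .
  ultimately show ?thesis using that P unfolding product_injections_def by blast
qed

lemma second_injection_is_kernel:
  assumes inj: "product_injections C A B P p1 p2 i1 i2"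
  shows "is_kernel C p1 i2"
proof -
  have P: "is_product C A B P p1 p2" and i2: "hom C i2 B P"
    and p1i2: "p1 \<cdot> i2 = zero_arr C B A" and p2i2: "p2 \<cdot> i2 = Id C B"
    using inj unfolding product_injections_def by auto
  have p: "hom C p1 P A" "hom C p2 P B" using product_homs[OF P] by auto
  have D: "Dom C i2 = B" "Dom C p1 = P" "Cod C p1 = A" using homD[OF i2] homD[OF p(1)] by auto
  show ?thesis
    unfolding is_kernel_def D
  proof (intro conjI allI impI)
    show "p1 \<in> Arr C" using homD[OF p(1)] by blast
    show "hom C i2 B P" "p1 \<cdot> i2 = zero_arr C B A" by fact+
    fix W u assume u: "hom C u W P" and p1u: "p1 \<cdot> u = zero_arr C W A"
    have h: "hom C (p2 \<cdot> u) W B" using hom_Comp[OF u p(2)] .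
    have "i2 \<cdot> (p2 \<cdot> u) = u"
    proof (rule product_arr_eqI[OF P hom_Comp[OF h i2] u])
      show "p1 \<cdot> (i2 \<cdot> (p2 \<cdot> u)) = p1 \<cdot> u"
        using Comp_assoc[OF h i2 p(1)] p1i2 zero_arr_Comp[OF h] hom_Obj[OF p(1)] p1u by simp
      show "p2 \<cdot> (i2 \<cdot> (p2 \<cdot> u)) = p2 \<cdot> u"
        using Comp_assoc[OF h i2 p(2)] p2i2 Comp_Id_left[OF h] by simp
    qed
    moreover have "h' = p2 \<cdot> u" if h': "hom C h' W B" and "i2 \<cdot> h' = u" for h'
      using that Comp_assoc[OF h' i2 p(2)] p2i2 Comp_Id_left[OF h'] by simp
    ultimately show "\<exists>!h. hom C h W B \<and> i2 \<cdot> h = u" using h by blast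
  qed
qed

lemma product_split_ext:
  assumes inj: "product_injections C A B P p1 p2 i1 i2"
    and \<sigma>: "hom C \<sigma> A P" and p1\<sigma>: "p1 \<cdot> \<sigma> = Id C A"
  shows "split_ext C i2 p1 \<sigma>"
proof -
  have "hom C p1 P A" using inj product_homs unfolding product_injections_def by blast
  then show ?thesis
    using second_injection_is_kernel[OF inj] \<sigma> p1\<sigma> homD unfolding split_ext_def by metis
qed

lemma zero_product:
  assumes Z: "zero_obj C Z" and X: "X \<in> Obj C"
  shows "is_product C Z X X (zero_arr C X Z) (Id C X)"
  unfolding is_product_def
proof (intro conjI allI impI)
  show "hom C (zero_arr C X Z) X Z" using hom_zero_arr[OF X zero_obj_Obj[OF Z]] .
  show "hom C (Id C X) X X" using hom_Id[OF X] .
  fix W u v assume u: "hom C u W Z" and v: "hom C v W X"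
  have "zero_arr C X Z \<cdot> v = u"
    using hom_to_zero_unique[OF Z hom_Comp[OF v hom_zero_arr[OF X zero_obj_Obj[OF Z]]] u] .
  then show "\<exists>!h. hom C h W X \<and> zero_arr C X Z \<cdot> h = u \<and> Id C X \<cdot> h = v"
    using v Comp_Id_left by (metis (no_types, lifting))
qed

lemma zero_commutes_with_id:
  assumes Z: "zero_obj C Z" and X: "X \<in> Obj C"
  shows "commutes_with_id C X (zero_arr C Z X)"
proof -
  have ZO: "Z \<in> Obj C" using zero_obj_Obj[OF Z] .
  define z where "z = zero_arr C Z X"
  have z: "hom C z Z X" unfolding z_def using hom_zero_arr[OF ZO X] .
  have "product_injections C Z X X (zero_arr C X Z) (Id C X) z (Id C X)"
    unfolding product_injections_def
    using zero_product[OF Z X] z hom_Id[OF X] hom_zero_arr[OF X ZO]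
      hom_to_zero_unique[OF Z hom_Comp[OF z hom_zero_arr[OF X ZO]] hom_Id[OF ZO]]
      Comp_Id_left[OF z] Comp_Id_right[OF hom_zero_arr[OF X ZO]] Comp_Id_left[OF hom_Id[OF X]]
    by (simp add: z_def)
  moreover have "Dom C z = Z" using homD[OF z] by blast
  ultimately have "commutes_with_id C X z"
    unfolding commutes_with_id_iff using z hom_Id[OF X] Comp_Id_left[OF z]
      Comp_Id_left[OF hom_Id[OF X]] by blast
  then show ?thesis unfolding z_def .
qed

lemma trivial_center_iff:
  assumes X: "X \<in> Obj C"
  shows "trivial_center C X \<longleftrightarrow> (\<forall>g. commutes_with_id C X g \<longrightarrow> g = zero_arr C (Dom C g) X)"
proof
  assume "trivial_center C X"
  then obtain Z z where center: "is_center C X Z z" and Z: "zero_obj C Z"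
    unfolding trivial_center_def by blast
  show "\<forall>g. commutes_with_id C X g \<longrightarrow> g = zero_arr C (Dom C g) X"
  proof (intro allI impI)
    fix g assume "commutes_with_id C X g"
    then obtain h where "hom C h (Dom C g) Z" and "z \<cdot> h = g"
      using center unfolding is_center_def by blast
    then show "g = zero_arr C (Dom C g) X"
      using zero_arr_eq[OF Z] center unfolding is_center_def by metis
  qed
next
  assume zero: "\<forall>g. commutes_with_id C X g \<longrightarrow> g = zero_arr C (Dom C g) X"
  obtain Z where Z: "zero_obj C Z" using ex_zero_obj by blast
  define z where "z = zero_arr C Z X"
  have z: "hom C z Z X" unfolding z_def using hom_zero_arr[OF zero_obj_Obj[OF Z] X] .
  have "commutes_with_id C X z" unfolding z_def using zero_commutes_with_id[OF Z X] .
  moreover have "\<exists>!h. hom C h (Dom C g) Z \<and> z \<cdot> h = g" if g: "commutes_with_id C X g" for g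
  proof -
    have DO: "Dom C g \<in> Obj C" using g hom_Obj unfolding commutes_with_id_def by blast
    obtain h where h: "hom C h (Dom C g) Z" using ex_hom_to_zero[OF Z DO] by blast
    have "z \<cdot> h = g" using zero_arr_Comp[OF h X] zero g unfolding z_def by simp
    then show ?thesis using h hom_to_zero_unique[OF Z] by blast
  qed
  ultimately have "is_center C X Z z" unfolding is_center_def using z by blast
  with Z show "trivial_center C X" unfolding trivial_center_def by (intro exI conjI)
qed

lemma strong_complete_imp_trivial_center:
  assumes X: "X \<in> Obj C" and sc: "strong_complete C X"
  shows "trivial_center C X"
  unfolding trivial_center_iff[OF X]
proof (intro allI impI)
  fix g assume "commutes_with_id C X g"
  then obtain P p1 p2 i1 i2 \<phi> where inj: "product_injections C (Dom C g) X P p1 p2 i1 i2"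
    and \<phi>: "hom C \<phi> P X" "\<phi> \<cdot> i1 = g" "\<phi> \<cdot> i2 = Id C X"
    unfolding commutes_with_id_iff by blast
  have i1: "hom C i1 (Dom C g) P" "p1 \<cdot> i1 = Id C (Dom C g)" "p2 \<cdot> i1 = zero_arr C (Dom C g) X"
    and i2: "hom C i2 X P" "p2 \<cdot> i2 = Id C X" and P: "is_product C (Dom C g) X P p1 p2"
    using inj unfolding product_injections_def by auto
  have p2: "hom C p2 P X" using product_homs[OF P] by blast
  have "protosplit_mono C i2"
    unfolding protosplit_mono_iff_split_ext using product_split_ext[OF inj i1(1,2)] by blast
  then have "\<exists>!r. hom C r (Cod C i2) X \<and> r \<cdot> i2 = Id C X"
    using sc[unfolded strong_complete_def, rule_format] homD[OF i2(1)] by blast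
  then have "\<phi> = p2" using \<phi> p2 i2 homD[OF i2(1)] by auto
  then show "g = zero_arr C (Dom C g) X" using \<phi>(2) i1(3) by simp
qed

end

locale finitely_complete_pointed_category = pointed_category +
  assumes finite_limits: "finite_limits C"
begin

lemma ex_pullback:
  assumes "hom C f A Y" and "hom C g B Y"
  obtains P p q where "is_pullback C f g P p q"
  using assms finite_limits unfolding finite_limits_def hom_def by metis

lemma ex_product:
  assumes A: "A \<in> Obj C" and B: "B \<in> Obj C"
  obtains P p1 p2 where "is_product C A B P p1 p2"
proof -
  obtain Z where Z: "zero_obj C Z" using ex_zero_obj by blast
  obtain a b where a: "hom C a A Z" and b: "hom C b B Z"
    using ex_hom_to_zero[OF Z A] ex_hom_to_zero[OF Z B] by blast
  obtain P p q where pb: "is_pullback C a b P p q" using ex_pullback[OF a b] .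
  have D: "Dom C a = A" "Dom C b = B" using homD[OF a] homD[OF b] by auto
  have "is_product C A B P p q"
    unfolding is_product_def
  proof (intro conjI allI impI)
    show "hom C p P A" "hom C q P B" using pb D unfolding is_pullback_def by auto
    fix W u v assume u: "hom C u W A" and v: "hom C v W B"
    have "a \<cdot> u = b \<cdot> v" using hom_to_zero_unique[OF Z hom_Comp[OF u a] hom_Comp[OF v b]] .
    then show "\<exists>!h. hom C h W P \<and> p \<cdot> h = u \<and> q \<cdot> h = v"
      using pb u v D unfolding is_pullback_def by auto
  qed
  then show ?thesis using that by blast
qed

lemma ex_equalizer:
  assumes f: "hom C f A Y" and f': "hom C f' A Y"
  obtains E e where "is_equalizer C f f' E e"
proof -
  have A: "A \<in> Obj C" and Y: "Y \<in> Obj C" using hom_Obj[OF f] by auto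
  obtain Q q1 q2 where Q: "is_product C A Y Q q1 q2" using ex_product[OF A Y] .
  have q: "hom C q1 Q A" "hom C q2 Q Y" using product_homs[OF Q] by auto
  obtain g where g: "hom C g A Q" "q1 \<cdot> g = Id C A" "q2 \<cdot> g = f"
    using product_pair[OF Q hom_Id[OF A] f] .
  obtain g' where g': "hom C g' A Q" "q1 \<cdot> g' = Id C A" "q2 \<cdot> g' = f'"
    using product_pair[OF Q hom_Id[OF A] f'] .
  have q1g: "q1 \<cdot> (g \<cdot> u) = u" "q1 \<cdot> (g' \<cdot> u) = u" if u: "hom C u W A" for W u
    using Comp_assoc[OF u g(1) q(1)] Comp_assoc[OF u g'(1) q(1)] g(2) g'(2) Comp_Id_left[OF u]
    by simp_all
  have q2g: "q2 \<cdot> (g \<cdot> u) = f \<cdot> u" "q2 \<cdot> (g' \<cdot> u) = f' \<cdot> u" if u: "hom C u W A" for W u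
    using Comp_assoc[OF u g(1) q(2)] Comp_assoc[OF u g'(1) q(2)] g(3) g'(3) by simp_all
  have g_eq_iff: "g \<cdot> u = g' \<cdot> u \<longleftrightarrow> f \<cdot> u = f' \<cdot> u" if u: "hom C u W A" for W u
    using product_arr_eqI[OF Q hom_Comp[OF u g(1)] hom_Comp[OF u g'(1)]] q1g[OF u] q2g[OF u]
    by metis
  \<comment> \<open>The pullback of the two graphs \<open>\<langle>1, f\<rangle>\<close> and \<open>\<langle>1, f'\<rangle>\<close> is the equalizer.\<close>
  obtain E e e' where pb: "is_pullback C g g' E e e'" using ex_pullback[OF g(1) g'(1)] .
  have D: "Dom C g = A" "Dom C g' = A" using homD[OF g(1)] homD[OF g'(1)] by auto
  have e: "hom C e E A" and e': "hom C e' E A" and gee': "g \<cdot> e = g' \<cdot> e'"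
    and univ: "\<And>W u v. hom C u W A \<Longrightarrow> hom C v W A \<Longrightarrow> g \<cdot> u = g' \<cdot> v \<Longrightarrow>
      \<exists>!h. hom C h W E \<and> e \<cdot> h = u \<and> e' \<cdot> h = v"
    using pb D unfolding is_pullback_def by auto
  have "e = e'" using q1g(1)[OF e] q1g(2)[OF e'] gee' by metis
  have "is_equalizer C f f' E e"
    unfolding is_equalizer_def homD[OF f, THEN conjunct2, THEN conjunct1]
  proof (intro conjI allI impI)
    show "f \<in> Arr C" using homD[OF f] by blast
    show "hom C f' A (Cod C f)" using f' homD[OF f] by simp
    show "hom C e E A" by fact
    show "f \<cdot> e = f' \<cdot> e" using g_eq_iff[OF e] gee' \<open>e = e'\<close> by simp
    fix W u assume u: "hom C u W A" and "f \<cdot> u = f' \<cdot> u"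
    then have "\<exists>!h. hom C h W E \<and> e \<cdot> h = u \<and> e' \<cdot> h = u" using univ g_eq_iff by blast
    then show "\<exists>!h. hom C h W E \<and> e \<cdot> h = u" using \<open>e = e'\<close> by simp
  qed
  then show ?thesis using that by blast
qed

end

locale pointed_protomodular_category = finitely_complete_pointed_category +
  assumes protomodular: "protomodular C"
begin

lemma split_ext_jointly_epic:
  assumes se: "split_ext C k p s" and f: "hom C f (Dom C p) Y" and f': "hom C f' (Dom C p) Y"
    and fk: "f \<cdot> k = f' \<cdot> k" and fs: "f \<cdot> s = f' \<cdot> s"
  shows "f = f'"
proof -
  note k = split_ext_homs(1)[OF se] and p = split_ext_homs(2)[OF se]
    and s = split_ext_homs(3)[OF se] and ps = split_ext_homs(4)[OF se]
  have ker: "is_kernel C p k" using se unfolding split_ext_def by blast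
  obtain E e where eq: "is_equalizer C f f' E e" using ex_equalizer[OF f f'] .
  have e: "hom C e E (Dom C p)" and fe: "f \<cdot> e = f' \<cdot> e"
    and univ: "\<And>W u. hom C u W (Dom C p) \<Longrightarrow> f \<cdot> u = f' \<cdot> u \<Longrightarrow> \<exists>!h. hom C h W E \<and> e \<cdot> h = u"
    using eq homD[OF f] unfolding is_equalizer_def by auto
  obtain kE where kE: "hom C kE (Dom C k) E" "e \<cdot> kE = k" using univ[OF k fk] by blast
  obtain sE where sE: "hom C sE (Cod C p) E" "e \<cdot> sE = s" using univ[OF s fs] by blast
  have pe: "hom C (p \<cdot> e) E (Cod C p)" using hom_Comp[OF e p] .
  have D: "Dom C kE = Dom C k" "Dom C (p \<cdot> e) = E" "Cod C (p \<cdot> e) = Cod C p"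
    using homD[OF kE(1)] homD[OF pe] by auto
  \<comment> \<open>The equalizer of \<open>f, f'\<close> contains \<open>k\<close> and \<open>s\<close>, so it is the middle of a split extension
    mapping to \<open>(k, p, s)\<close> by \<open>(1, e, 1)\<close>; the short five lemma makes \<open>e\<close> invertible.\<close>
  have seE: "split_ext C kE (p \<cdot> e) sE"
    unfolding split_ext_def D
    using kernel_Comp_monic[OF ker e equalizer_monic[OF eq] kE] sE(1) Comp_assoc[OF sE(1) e p] sE(2) ps
    by simp
  have "split_ext_morph C kE (p \<cdot> e) sE k p s (Id C (Dom C k)) e (Id C (Cod C p))"
    unfolding split_ext_morph_def D
    using seE se e kE(2) sE(2) hom_Id hom_Obj[OF k] hom_Obj[OF p]
      Comp_Id_right[OF k] Comp_Id_right[OF s] Comp_Id_left[OF pe] by simp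
  then have "iso C e"
    using protomodular iso_Id hom_Obj[OF k] hom_Obj[OF p] unfolding protomodular_def by blast
  then obtain e' where e': "hom C e' (Dom C p) E" and ee': "e \<cdot> e' = Id C (Dom C p)"
    using iso_inverse[OF _ e] by metis
  show "f = f'" using cancel_right_split_epi[OF e e' ee' f f' fe] .
qed

lemma injection_retraction_eq_projection:
  assumes tc: "trivial_center C X" and inj: "product_injections C B X P q1 q2 i1 i2"
    and \<phi>: "hom C \<phi> P X" and \<phi>i2: "\<phi> \<cdot> i2 = Id C X"
  shows "\<phi> = q2"
proof -
  have i1: "hom C i1 B P" "q1 \<cdot> i1 = Id C B" "q2 \<cdot> i1 = zero_arr C B X"
    and q2i2: "q2 \<cdot> i2 = Id C X" and P: "is_product C B X P q1 q2"
    using inj unfolding product_injections_def by auto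
  have q: "hom C q1 P B" "hom C q2 P X" using product_homs[OF P] by auto
  have D: "Dom C (\<phi> \<cdot> i1) = B" "Dom C q1 = P" using homD[OF hom_Comp[OF i1(1) \<phi>]] homD[OF q(1)] by auto
  have "commutes_with_id C X (\<phi> \<cdot> i1)"
    unfolding commutes_with_id_iff D using hom_Comp[OF i1(1) \<phi>] inj \<phi> \<phi>i2 by blast
  then have "\<phi> \<cdot> i1 = zero_arr C B X" using tc trivial_center_iff hom_Obj[OF \<phi>] D(1) by metis
  then show "\<phi> = q2"
    using split_ext_jointly_epic[OF product_split_ext[OF inj i1(1,2)]] D(2) \<phi> q(2) \<phi>i2 q2i2 i1(3)
    by simp
qed

lemma kernel_retraction_pair_iso:
  assumes se: "split_ext C k p s"
    and r: "hom C r (Dom C p) (Dom C k)" and rk: "r \<cdot> k = Id C (Dom C k)"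
    and inj: "product_injections C (Cod C p) (Dom C k) P q1 q2 i1 i2"
    and m: "hom C m (Dom C p) P" and q1m: "q1 \<cdot> m = p" and q2m: "q2 \<cdot> m = r"
  shows "iso C m" and "m \<cdot> k = i2"
proof -
  note k = split_ext_homs(1)[OF se] and p = split_ext_homs(2)[OF se]
    and s = split_ext_homs(3)[OF se] and ps = split_ext_homs(4)[OF se]
    and pk = split_ext_homs(5)[OF se]
  have P: "is_product C (Cod C p) (Dom C k) P q1 q2" and i2: "hom C i2 (Dom C k) P"
    and q1i2: "q1 \<cdot> i2 = zero_arr C (Dom C k) (Cod C p)" and q2i2: "q2 \<cdot> i2 = Id C (Dom C k)"
    using inj unfolding product_injections_def by auto
  have q: "hom C q1 P (Cod C p)" "hom C q2 P (Dom C k)" using product_homs[OF P] by auto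
  have BO: "Cod C p \<in> Obj C" using hom_Obj[OF p] by blast
  obtain \<sigma> where \<sigma>: "hom C \<sigma> (Cod C p) P" "q1 \<cdot> \<sigma> = Id C (Cod C p)" "q2 \<cdot> \<sigma> = r \<cdot> s"
    using product_pair[OF P hom_Id[OF BO] hom_Comp[OF s r]] .
  show mk: "m \<cdot> k = i2"
    using product_arr_eqI[OF P hom_Comp[OF k m] i2] Comp_assoc[OF k m q(1)] Comp_assoc[OF k m q(2)]
      q1m q2m pk rk q1i2 q2i2 by simp
  have ms: "m \<cdot> s = \<sigma>"
    using product_arr_eqI[OF P hom_Comp[OF s m] \<sigma>(1)] Comp_assoc[OF s m q(1)] Comp_assoc[OF s m q(2)]
      q1m q2m ps \<sigma>(2,3) by simp
  have D: "Dom C i2 = Dom C k" "Dom C q1 = P" "Cod C q1 = Cod C p" using homD[OF i2] homD[OF q(1)] by auto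
  have "split_ext_morph C k p s i2 q1 \<sigma> (Id C (Dom C k)) m (Id C (Cod C p))"
    unfolding split_ext_morph_def D
    using se product_split_ext[OF inj \<sigma>(1,2)] m hom_Id hom_Obj[OF k] BO mk ms q1m
      Comp_Id_right[OF i2] Comp_Id_right[OF \<sigma>(1)] Comp_Id_left[OF p] by simp
  then show "iso C m"
    using protomodular iso_Id hom_Obj[OF k] BO unfolding protomodular_def by blast
qed

lemma kernel_retraction_unique:
  assumes tc: "trivial_center C (Dom C k)" and se: "split_ext C k p s"
    and r: "hom C r (Dom C p) (Dom C k)" "r \<cdot> k = Id C (Dom C k)"
    and r': "hom C r' (Dom C p) (Dom C k)" "r' \<cdot> k = Id C (Dom C k)"
  shows "r = r'"
proof -
  note k = split_ext_homs(1)[OF se] and p = split_ext_homs(2)[OF se]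
  obtain P q1 q2 where P: "is_product C (Cod C p) (Dom C k) P q1 q2"
    using ex_product hom_Obj[OF p] hom_Obj[OF k] by metis
  obtain i1 i2 where inj: "product_injections C (Cod C p) (Dom C k) P q1 q2 i1 i2"
    using product_injections_exist[OF P] .
  obtain m where m: "hom C m (Dom C p) P" "q1 \<cdot> m = p" "q2 \<cdot> m = r"
    using product_pair[OF P p r(1)] .
  have "iso C m" and mk: "m \<cdot> k = i2"
    using kernel_retraction_pair_iso[OF se r inj m] by auto
  then obtain n where n: "hom C n P (Dom C p)" and nm: "n \<cdot> m = Id C (Dom C p)"
    using iso_inverse m(1) by metis
  have i2: "hom C i2 (Dom C k) P" using inj unfolding product_injections_def by blast
  have ni2: "n \<cdot> i2 = k" using mk Comp_assoc[OF k m(1) n] nm Comp_Id_left[OF k] by simp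
  have "r \<cdot> n = q2"
    using injection_retraction_eq_projection[OF tc inj hom_Comp[OF n r(1)]]
      Comp_assoc[OF i2 n r(1)] ni2 r(2) by simp
  moreover have "r' \<cdot> n = q2"
    using injection_retraction_eq_projection[OF tc inj hom_Comp[OF n r'(1)]]
      Comp_assoc[OF i2 n r'(1)] ni2 r'(2) by simp
  ultimately show "r = r'" using cancel_right_split_epi[OF n m(1) nm r(1) r'(1)] by simp
qed

lemma proto_complete_trivial_center_imp_strong_complete:
  assumes pc: "proto_complete C X" and tc: "trivial_center C X"
  shows "strong_complete C X"
  unfolding strong_complete_def
proof (intro allI impI)
  fix k assume psm: "protosplit_mono C k" and Dk: "Dom C k = X"
  obtain p s where se: "split_ext C k p s" using psm unfolding protosplit_mono_iff_split_ext by blast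
  have Ck: "Cod C k = Dom C p" using homD[OF split_ext_homs(1)[OF se]] by blast
  obtain r0 where "hom C r0 (Dom C p) X" and "r0 \<cdot> k = Id C X"
    using pc psm Dk Ck unfolding proto_complete_def split_mono_def by auto
  then show "\<exists>!r. hom C r (Cod C k) X \<and> r \<cdot> k = Id C X"
    using kernel_retraction_unique[OF tc[folded Dk] se] Dk unfolding Ck by blast
qed

end

lemma pointed_protomodular_category_if_pointed_protomodular:
  "pointed_protomodular C \<Longrightarrow> pointed_protomodular_category C"
  unfolding pointed_protomodular_def pointed_def
  by unfold_locales auto

theorem proposition4p5:
  fixes C :: "('o, 'a) cat" and X :: 'o
  assumes "pointed_protomodular C"
    and "X \<in> Obj C"
  shows "strong_complete C X \<longleftrightarrow> proto_complete C X \<and> trivial_center C X"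
proof -
  interpret pointed_protomodular_category C
    using assms(1) by (rule pointed_protomodular_category_if_pointed_protomodular)
  show ?thesis
    using strong_complete_imp_proto_complete[of C X] strong_complete_imp_trivial_center[OF assms(2)]
      proto_complete_trivial_center_imp_strong_complete[of X] by blast
qed

end
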